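(* Let $n\ge1$ and $c\ge2$ be integers and $C=\{0,1,\dots,c-1\}\subseteq\mathbb{Z}/n\mathbb{Z}$. For all nonempty $A,B\subseteq\mathbb{Z}/n\mathbb{Z}$, \[ |A+B+C|\ge\min\{n,\ |A|+|B|+(c-2)\}. \]
   Context: For subsets $X,Y$ of an abelian group, $X+Y=\{x+y: x\in X, y\in Y\}$; elements of $C$ are taken modulo $n$. *)

theory Defs
  imports Main
begin

text \<open>Z/nZ is represented by the residues {0..<n} (as nat); the sumset X + Y in Z/nZ
  is the set of residues (x + y) mod n.\<close>

definition sumset_mod :: "nat \<Rightarrow> nat set \<Rightarrow> nat set \<Rightarrow> nat set" where
  "sumset_mod n X Y = {(x + y) mod n | x y. x \<in> X \<and> y \<in> Y}"

end

theory Submission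
  imports Defs "HOL-Number_Theory.Cong"
begin

text \<open>Put \<open>X = A + B\<close>. Since \<open>C\<close> is an interval starting at \<open>0\<close>, \<open>X + C\<close> arises from \<open>X\<close>
  by adding \<open>{0, 1}\<close> repeatedly, \<open>c - 1\<close> times. Each step enlarges a proper subset of
  \<open>\<int>/n\<int>\<close> by at least one element, because the only nonempty set invariant under
  \<open>x \<mapsto> x + 1\<close> is the whole group. So it suffices to show \<open>|A + B + {0, 1}| \<ge> min n (|A| + |B|)\<close>.
  This is proved by induction on \<open>|B|\<close> with Dyson's transform
  \<open>(A, B) \<mapsto> (A \<union> (B + e), B \<inter> (A - e))\<close>, which preserves \<open>|A| + |B|\<close> and does not enlarge
  \<open>A + B\<close>. If no transform with \<open>e \<in> A - B\<close> shrinks \<open>B\<close>, then \<open>A + B - B \<subseteq> A\<close>, so \<open>A + B\<close>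
  is invariant under the \<open>|B|\<close> translations by \<open>B - b\<^sub>0\<close>; any such set \<open>X \<noteq> \<int>/n\<int>\<close> satisfies
  \<open>|X + {0, 1}| \<ge> |X| + |B|\<close>, as the translates of one new element of \<open>X + 1\<close> by \<open>B - b\<^sub>0\<close> are
  again new.\<close>

definition shift_mod :: "nat \<Rightarrow> nat \<Rightarrow> nat set \<Rightarrow> nat set" where
  "shift_mod n t X = (\<lambda>x. (x + t) mod n) ` X"

lemma inj_on_add_mod: "inj_on (\<lambda>x::nat. (x + t) mod n) {0..<n}"
proof (rule inj_onI)
  fix x y assume "x \<in> {0..<n}" "y \<in> {0..<n}" "(x + t) mod n = (y + t) mod n"
  then show "x = y" using cong_add_rcancel_nat[of x t y n] unfolding cong_def by simp
qed

lemma card_shift_mod: "X \<subseteq> {0..<n} \<Longrightarrow> card (shift_mod n t X) = card X"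
  unfolding shift_mod_def by (rule card_image) (rule inj_on_subset[OF inj_on_add_mod])

lemma shift_mod_subset: "0 < n \<Longrightarrow> shift_mod n t X \<subseteq> {0..<n}"
  unfolding shift_mod_def by auto

lemma shift_mod_shift_mod: "shift_mod n s (shift_mod n t X) = shift_mod n (t + s) X"
  unfolding shift_mod_def image_image by (simp add: mod_add_left_eq add.assoc)

lemma sumset_mod_subset: "0 < n \<Longrightarrow> sumset_mod n X Y \<subseteq> {0..<n}"
  unfolding sumset_mod_def by auto

lemma mod_add_diff_cancel: "(b::nat) < n \<Longrightarrow> (b + (a + n - b) mod n) mod n = a mod n"
  by (simp add: mod_add_right_eq)

lemma shift_mod_one_invariant_eq:
  assumes X: "X \<subseteq> {0..<n}" "X \<noteq> {}" and inv: "shift_mod n 1 X \<subseteq> X"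
  shows "X = {0..<n}"
proof -
  have shifts: "shift_mod n k X \<subseteq> X" for k
  proof (induction k)
    case 0
    show ?case using X(1) by (auto simp: shift_mod_def)
  next
    case (Suc k)
    have "shift_mod n (Suc k) X = shift_mod n 1 (shift_mod n k X)"
      by (simp add: shift_mod_shift_mod)
    also have "\<dots> \<subseteq> shift_mod n 1 X"
      using Suc.IH unfolding shift_mod_def by (rule image_mono)
    finally show ?case using inv by blast
  qed
  obtain x where x: "x \<in> X" using X(2) by blast
  have "y \<in> X" if "y < n" for y
  proof -
    have "(x + (y + n - x) mod n) mod n = y"
      using mod_add_diff_cancel[of x n y] x X(1) that by auto
    then show ?thesis using shifts[of "(y + n - x) mod n"] x unfolding shift_mod_def by force
  qed
  then show ?thesis using X(1) by auto
qed

lemma card_union_shift_mod_ge_stabilizer: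
  assumes X: "X \<subseteq> {0..<n}" "X \<noteq> {}" "X \<noteq> {0..<n}"
    and T: "T \<subseteq> {0..<n}" and stab: "\<forall>t\<in>T. shift_mod n t X \<subseteq> X"
  shows "card X + card T \<le> card (X \<union> shift_mod n 1 X)"
proof -
  have "finite X" using X(1) finite_subset by blast
  have X_shift: "shift_mod n t X = X" if "t \<in> T" for t
  proof (rule card_subset_eq[OF \<open>finite X\<close>])
    show "shift_mod n t X \<subseteq> X" using stab that by blast
    show "card (shift_mod n t X) = card X" using card_shift_mod[OF X(1)] .
  qed
  have "\<not> shift_mod n 1 X \<subseteq> X" using shift_mod_one_invariant_eq[OF X(1,2)] X(3) by blast
  then obtain x where x: "x \<in> X" "(x + 1) mod n \<notin> X" unfolding shift_mod_def by blast
  define d where "d = (x + 1) mod n"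
  have "d < n" using x X(1) by (auto simp: d_def)
  have new: "shift_mod n d T \<subseteq> shift_mod n 1 X - X"
  proof
    fix y assume "y \<in> shift_mod n d T"
    then obtain t where t: "t \<in> T" "y = (t + d) mod n" unfolding shift_mod_def by blast
    have "(x + t) mod n \<in> shift_mod n t X"
      unfolding shift_mod_def using x(1) by (rule imageI)
    then have "(x + t) mod n \<in> X" by (simp only: X_shift[OF t(1)])
    moreover have "y = ((x + t) mod n + 1) mod n"
      unfolding t(2) d_def mod_add_left_eq mod_add_right_eq by (simp add: ac_simps)
    ultimately have "y \<in> shift_mod n 1 X" unfolding shift_mod_def by blast
    moreover have "y \<notin> X"
    proof
      assume "y \<in> X"
      then obtain x' where x': "x' \<in> X" "y = (x' + t) mod n"
        using X_shift[OF t(1)] unfolding shift_mod_def by blast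
      then have "(x' + t) mod n = (d + t) mod n" using t(2) by (simp only: add.commute)
      moreover have "x' < n" using x'(1) X(1) by auto
      ultimately have "x' = d" using inj_onD[OF inj_on_add_mod, of x' t n d] \<open>d < n\<close> by simp
      then show False using x'(1) x(2) d_def by simp
    qed
    ultimately show "y \<in> shift_mod n 1 X - X" by blast
  qed
  have "finite (shift_mod n 1 X)" using \<open>finite X\<close> by (simp add: shift_mod_def)
  then have "card T \<le> card (shift_mod n 1 X - X)"
    using card_mono[OF _ new] card_shift_mod[OF T] by simp
  moreover have "card (X \<union> shift_mod n 1 X) = card X + card (shift_mod n 1 X - X)"
    using card_Un_disjoint[OF \<open>finite X\<close>, of "shift_mod n 1 X - X"] \<open>finite (shift_mod n 1 X)\<close>
    by (simp add: Un_Diff_cancel)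
  ultimately show ?thesis by simp
qed

lemma card_union_shift_mod_one_ge:
  assumes X: "X \<subseteq> {0..<n}" "X \<noteq> {}"
  shows "min n (card X + 1) \<le> card (X \<union> shift_mod n 1 X)"
proof (cases "X = {0..<n}")
  case True
  then have "0 < n" using X(2) by simp
  then have "X \<union> shift_mod n 1 X = {0..<n}" using True shift_mod_subset by blast
  then show ?thesis by simp
next
  case False
  have "shift_mod n 0 X \<subseteq> X" using X(1) by (auto simp: shift_mod_def)
  moreover have "{0} \<subseteq> {0..<n}" using X by fastforce
  ultimately show ?thesis
    using card_union_shift_mod_ge_stabilizer[OF X False, of "{0}"] by simp
qed

lemma sumset_mod_dyson_subset:
  "sumset_mod n (A \<union> shift_mod n e B) {y \<in> B. (y + e) mod n \<in> A} \<subseteq> sumset_mod n A B"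
proof
  fix w assume "w \<in> sumset_mod n (A \<union> shift_mod n e B) {y \<in> B. (y + e) mod n \<in> A}"
  then obtain x y where w: "w = (x + y) mod n" and x: "x \<in> A \<union> shift_mod n e B"
    and y: "y \<in> B" "(y + e) mod n \<in> A"
    unfolding sumset_mod_def by blast
  show "w \<in> sumset_mod n A B"
  proof (cases "x \<in> A")
    case True
    then show ?thesis using w y(1) unfolding sumset_mod_def by blast
  next
    case False
    then obtain z where "z \<in> B" "x = (z + e) mod n" using x unfolding shift_mod_def by blast
    moreover have "((z + e) mod n + y) mod n = ((y + e) mod n + z) mod n"
      unfolding mod_add_left_eq by (simp add: ac_simps)
    ultimately show ?thesis using w y(2) unfolding sumset_mod_def by blast
  qed
qed

lemma card_dyson_transform:
  assumes "finite A" and B: "B \<subseteq> {0..<n}"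
  shows "card (A \<union> shift_mod n e B) + card {y \<in> B. (y + e) mod n \<in> A} = card A + card B"
proof -
  define B' where "B' = {y \<in> B. (y + e) mod n \<in> A}"
  have "finite B" using B finite_subset by blast
  have "shift_mod n e B - A = shift_mod n e (B - B')"
    unfolding shift_mod_def B'_def by blast
  then have "card (shift_mod n e B - A) = card (B - B')"
    using card_shift_mod[of "B - B'" n e] B by auto
  also have "\<dots> = card B - card B'"
    using \<open>finite B\<close> by (simp add: card_Diff_subset B'_def)
  finally have "card (shift_mod n e B - A) = card B - card B'" .
  moreover have "card (A \<union> shift_mod n e B) = card A + card (shift_mod n e B - A)"
    using card_Un_disjoint[OF \<open>finite A\<close>, of "shift_mod n e B - A"] \<open>finite B\<close>
    by (simp add: shift_mod_def)
  moreover have "card B' \<le> card B" using \<open>finite B\<close> by (simp add: B'_def card_mono)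
  ultimately show ?thesis unfolding B'_def by simp
qed

lemma card_sumset_mod_union_shift_ge_if_closed:
  assumes A: "A \<subseteq> {0..<n}" "A \<noteq> {}" and B: "B \<subseteq> {0..<n}" "B \<noteq> {}"
    and closed: "\<forall>a\<in>A. \<forall>b\<in>B. shift_mod n ((a + n - b) mod n) B \<subseteq> A"
  shows "min n (card A + card B)
           \<le> card (sumset_mod n A B \<union> shift_mod n 1 (sumset_mod n A B))"
proof -
  define X where "X = sumset_mod n A B"
  have "0 < n" using A by auto
  have X: "X \<subseteq> {0..<n}" using sumset_mod_subset[OF \<open>0 < n\<close>] by (simp add: X_def)
  obtain b0 where b0: "b0 \<in> B" using B(2) by blast
  have "b0 < n" using b0 B(1) by auto
  define k where "k = n - b0"
  have minus_b0: "a + n - b0 = a + k" for a using \<open>b0 < n\<close> by (simp add: k_def)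
  define T where "T = shift_mod n k B"
  have stab: "\<forall>t\<in>T. shift_mod n t X \<subseteq> X"
  proof (intro ballI subsetI)
    fix t w assume "t \<in> T" "w \<in> shift_mod n t X"
    then obtain b x where b: "b \<in> B" "t = (b + k) mod n"
      and x: "x \<in> X" "w = (x + t) mod n"
      unfolding T_def shift_mod_def by blast
    obtain a b' where ab: "a \<in> A" "b' \<in> B" "x = (a + b') mod n"
      using x(1) unfolding X_def sumset_mod_def by blast
    have "shift_mod n ((a + n - b0) mod n) B \<subseteq> A" using closed ab(1) b0 by blast
    then have "(b + (a + k) mod n) mod n \<in> A"
      using b(1) by (simp add: minus_b0 shift_mod_def image_subset_iff)
    moreover have "w = ((b + (a + k) mod n) mod n + b') mod n"
      unfolding x(2) ab(3) b(2) mod_add_eq mod_add_left_eq mod_add_right_eq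
      by (simp add: ac_simps)
    ultimately show "w \<in> X" using ab(2) unfolding X_def sumset_mod_def by blast
  qed
  have "shift_mod n b0 A \<subseteq> X" unfolding shift_mod_def X_def sumset_mod_def using b0 by blast
  moreover have "finite X" using X finite_subset by blast
  ultimately have "card A \<le> card X" using card_mono card_shift_mod[OF A(1)] by metis
  have "X \<noteq> {}" using A(2) \<open>shift_mod n b0 A \<subseteq> X\<close> unfolding shift_mod_def by blast
  show ?thesis
  proof (cases "X = {0..<n}")
    case True
    then have "X \<union> shift_mod n 1 X = {0..<n}" using shift_mod_subset[OF \<open>0 < n\<close>] by blast
    then show ?thesis by (simp add: X_def)
  next
    case False
    have "T \<subseteq> {0..<n}" "card T = card B"
      using shift_mod_subset[OF \<open>0 < n\<close>] card_shift_mod[OF B(1)] by (simp_all add: T_def)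
    then show ?thesis
      using card_union_shift_mod_ge_stabilizer[OF X \<open>X \<noteq> {}\<close> False _ stab] \<open>card A \<le> card X\<close>
      by (simp add: X_def)
  qed
qed

lemma card_sumset_mod_union_shift_ge:
  assumes "A \<subseteq> {0..<n}" "B \<subseteq> {0..<n}" "A \<noteq> {}" "B \<noteq> {}"
  shows "min n (card A + card B)
           \<le> card (sumset_mod n A B \<union> shift_mod n 1 (sumset_mod n A B))"
  using assms
proof (induction "card B" arbitrary: A B rule: less_induct)
  case less
  show ?case
  proof (cases "\<forall>a\<in>A. \<forall>b\<in>B. shift_mod n ((a + n - b) mod n) B \<subseteq> A")
    case True
    then show ?thesis using card_sumset_mod_union_shift_ge_if_closed less.prems by blast
  next
    case False
    then obtain a b where ab: "a \<in> A" "b \<in> B"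
      and not_closed: "\<not> shift_mod n ((a + n - b) mod n) B \<subseteq> A" by blast
    define e where "e = (a + n - b) mod n"
    define A' where "A' = A \<union> shift_mod n e B"
    define B' where "B' = {y \<in> B. (y + e) mod n \<in> A}"
    have "0 < n" "finite A" "finite B" using less.prems finite_subset by auto
    have "a < n" "b < n" using ab less.prems(1,2) by auto
    then have "b \<in> B'" using mod_add_diff_cancel[of b n a] ab by (simp add: B'_def e_def)
    moreover have "B' \<subset> B"
      using not_closed unfolding B'_def e_def shift_mod_def by blast
    ultimately have IH: "min n (card A' + card B')
                           \<le> card (sumset_mod n A' B' \<union> shift_mod n 1 (sumset_mod n A' B'))"
      using less.hyps[of B' A'] psubset_card_mono[OF \<open>finite B\<close>] less.prems
        shift_mod_subset[OF \<open>0 < n\<close>]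
      by (auto simp: A'_def B'_def)
    have "sumset_mod n A' B' \<subseteq> sumset_mod n A B"
      unfolding A'_def B'_def by (rule sumset_mod_dyson_subset)
    then have "sumset_mod n A' B' \<union> shift_mod n 1 (sumset_mod n A' B')
                 \<subseteq> sumset_mod n A B \<union> shift_mod n 1 (sumset_mod n A B)"
      unfolding shift_mod_def by blast
    moreover have "finite (sumset_mod n A B \<union> shift_mod n 1 (sumset_mod n A B))"
      using sumset_mod_subset[OF \<open>0 < n\<close>] shift_mod_subset[OF \<open>0 < n\<close>]
      by (meson finite_UnI finite_atLeastLessThan finite_subset)
    ultimately have "card (sumset_mod n A' B' \<union> shift_mod n 1 (sumset_mod n A' B'))
                       \<le> card (sumset_mod n A B \<union> shift_mod n 1 (sumset_mod n A B))"
      by (rule card_mono[rotated])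
    moreover have "card A' + card B' = card A + card B"
      unfolding A'_def B'_def using card_dyson_transform \<open>finite A\<close> less.prems(2) .
    ultimately show ?thesis using IH by simp
  qed
qed

lemma sumset_mod_initial_segment:
  "sumset_mod n X {j mod n | j. j < m} = {(x + j) mod n | x j. x \<in> X \<and> j < m}"
  unfolding sumset_mod_def
proof (intro equalityI subsetI)
  fix w assume "w \<in> {(x + y) mod n | x y. x \<in> X \<and> y \<in> {j mod n | j. j < m}}"
  then obtain x j where "w = (x + j mod n) mod n" "x \<in> X" "j < m" by blast
  then show "w \<in> {(x + j) mod n | x j. x \<in> X \<and> j < m}" by (auto simp: mod_add_right_eq)
next
  fix w assume "w \<in> {(x + j) mod n | x j. x \<in> X \<and> j < m}"
  then obtain x j where "w = (x + j mod n) mod n" "x \<in> X" "j < m"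
    by (auto simp: mod_add_right_eq)
  then show "w \<in> {(x + y) mod n | x y. x \<in> X \<and> y \<in> {j mod n | j. j < m}}" by blast
qed

lemma sumset_mod_initial_segment_one:
  "X \<subseteq> {0..<n} \<Longrightarrow> sumset_mod n X {j mod n | j. j < 1} = X"
  unfolding sumset_mod_initial_segment by force

lemma sumset_mod_initial_segment_Suc:
  "sumset_mod n X {j mod n | j. j < Suc (Suc m)}
     = sumset_mod n X {j mod n | j. j < Suc m}
         \<union> shift_mod n 1 (sumset_mod n X {j mod n | j. j < Suc m})"
proof -
  have step: "((x + j) mod n + 1) mod n = (x + Suc j) mod n" for x j :: nat
    by (simp add: mod_Suc_eq)
  have "{(x + j) mod n | x j. x \<in> X \<and> j < Suc (Suc m)}
          = {(x + j) mod n | x j. x \<in> X \<and> j < Suc m}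
              \<union> {(x + Suc j) mod n | x j. x \<in> X \<and> j < Suc m}"
  proof (intro equalityI subsetI)
    fix w assume "w \<in> {(x + j) mod n | x j. x \<in> X \<and> j < Suc (Suc m)}"
    then obtain x j where "w = (x + j) mod n" "x \<in> X" "j < Suc (Suc m)" by blast
    then show "w \<in> {(x + j) mod n | x j. x \<in> X \<and> j < Suc m}
                 \<union> {(x + Suc j) mod n | x j. x \<in> X \<and> j < Suc m}"
      by (cases j) force+
  qed (blast intro: less_SucI Suc_mono)
  also have "{(x + Suc j) mod n | x j. x \<in> X \<and> j < Suc m}
               = shift_mod n 1 {(x + j) mod n | x j. x \<in> X \<and> j < Suc m}"
    unfolding shift_mod_def step[symmetric] by blast
  finally show ?thesis unfolding sumset_mod_initial_segment .
qed

lemma card_sumset_mod_initial_segment_ge: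
  assumes "X \<subseteq> {0..<n}" "X \<noteq> {}"
  shows "min n (card (X \<union> shift_mod n 1 X) + m)
           \<le> card (sumset_mod n X {j mod n | j. j < m + 2})"
proof (induction m)
  case 0
  show ?case
    using sumset_mod_initial_segment_Suc[of n X 0] sumset_mod_initial_segment_one[OF assms(1)]
    by simp
next
  case (Suc m)
  define Y where "Y = sumset_mod n X {j mod n | j. j < Suc (Suc m)}"
  have "Y \<subseteq> {0..<n}" "Y \<noteq> {}"
    using assms sumset_mod_subset[of n X] unfolding Y_def sumset_mod_def by force+
  then have "min n (card Y + 1) \<le> card (sumset_mod n X {j mod n | j. j < Suc m + 2})"
    using card_union_shift_mod_one_ge sumset_mod_initial_segment_Suc[of n X "Suc m"]
    by (simp add: Y_def)
  then show ?case using Suc.IH by (simp add: Y_def)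
qed

theorem lemma3p5:
  fixes n c :: nat and A B :: "nat set"
  assumes "n \<ge> 1" and "c \<ge> 2"
    and "A \<subseteq> {0..<n}" and "B \<subseteq> {0..<n}"
    and "A \<noteq> {}" and "B \<noteq> {}"
  shows "card (sumset_mod n (sumset_mod n A B) {k mod n | k. k < c})
           \<ge> min n (card A + card B + (c - 2))"
proof -
  define X where "X = sumset_mod n A B"
  obtain m where c: "c = m + 2" using assms(2) by (metis add.commute le_Suc_ex numeral_2_eq_2)
  have "X \<subseteq> {0..<n}" using sumset_mod_subset assms(1) by (simp add: X_def)
  moreover have "X \<noteq> {}" using assms(5,6) by (auto simp: X_def sumset_mod_def)
  ultimately have "min n (card (X \<union> shift_mod n 1 X) + m)
                     \<le> card (sumset_mod n X {k mod n | k. k < c})"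
    unfolding c by (rule card_sumset_mod_initial_segment_ge)
  moreover have "min n (card A + card B) \<le> card (X \<union> shift_mod n 1 X)"
    using card_sumset_mod_union_shift_ge[OF assms(3-6)] by (simp add: X_def)
  ultimately show ?thesis by (simp add: X_def c)
qed

end
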